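(* Let $(X,\nu)$ be a $\sigma$-finite measure space, let $\omega:X\to(0,\infty)$ be a measurable function, and let $1<q_0\le p_0<\infty$ with $\frac1{p_0}+\frac1{q_0}=1$. Then for every $f\in L^1(X,\nu)\cap L^{q_0}(X,\omega^{1/p_0})$ with $\|f\|_1=1$, the map \[ [p_0,\infty)\to\mathbb{R},\qquad p\mapsto -p\log\|f\|_{q,\omega^{1/p}}, \] where $q$ is given by $\frac1p+\frac1q=1$, is increasing. Equivalently, the map $(1,q_0]\to\mathbb{R}$, $q\mapsto -p\log\|f\|_{q,\omega^{1/p}}$ is decreasing.
   Context: For a measurable $\omega:X\to(0,\infty)$ and $1\le p<\infty$, the weighted space $L^p(X,\omega)$ consists of measurable $f:X\to\mathbb{C}$ with $\|f\|_{p,\omega}=\big(\int_X|f|^p\omega^p\,d\nu\big)^{1/p}<\infty$. Thus $\|f\|_{q,\omega^{1/p}}=\big(\int_X|f|^q\omega^{q/p}\,d\nu\big)^{1/q}$, and $\|f\|_1=\int_X|f|\,d\nu$. *)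

theory Defs
  imports "HOL-Analysis.Analysis"
begin

text \<open>Weighted L^p norm: (integral of |f|^p w^p)^(1/p), computed as a nonnegative
  integral; finiteness is asserted separately where membership in L^p(X,w) is needed.\<close>
definition wLp_nn :: "'a measure \<Rightarrow> ('a \<Rightarrow> real) \<Rightarrow> real \<Rightarrow> ('a \<Rightarrow> complex) \<Rightarrow> ennreal" where
  "wLp_nn M w p f = (\<integral>\<^sup>+ x. ennreal (norm (f x) powr p * w x powr p) \<partial>M)"

definition wLp_norm :: "'a measure \<Rightarrow> ('a \<Rightarrow> real) \<Rightarrow> real \<Rightarrow> ('a \<Rightarrow> complex) \<Rightarrow> real" where
  "wLp_norm M w p f = (enn2real (wLp_nn M w p f)) powr (1 / p)"

end

theory Submission
  imports Defs
begin

text \<open>Write \<open>F = |f|\<close>, \<open>G = F \<omega>\<close> and \<open>t = 1/(p - 1)\<close>. For the conjugate exponent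
  \<open>q = p/(p - 1)\<close> the integrand of the \<open>q\<close>-th power of the weighted norm is \<open>F G\<^sup>t\<close>,
  so with \<open>I(t) = \<integral> F G\<^sup>t d\<nu>\<close> the quantity \<open>-p log \<parallel>f\<parallel>\<close> equals \<open>-(log I(t)) / t\<close>.
  Since \<open>F d\<nu>\<close> is a probability measure, \<open>I(t) powr (1/t)\<close> is the \<open>L\<^sup>t(F d\<nu>)\<close>-norm of \<open>G\<close>,
  which increases with \<open>t\<close> by Lyapunov's inequality (Jensen for the concave map
  \<open>y \<mapsto> y powr (s/t)\<close>, \<open>s \<le> t\<close>). As \<open>p\<close> increases, \<open>t\<close> decreases.\<close>

lemma powr_le_tangent:
  fixes y r :: real
  assumes "0 < r" "r \<le> 1" "0 \<le> y"
  shows "y powr r \<le> 1 - r + r * y"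
proof (cases "y = 0")
  case True
  then show ?thesis using assms by simp
next
  case False
  then have "y powr r * 1 powr (1 - r) \<le> r * y + (1 - r) * 1"
    using assms by (intro Youngs_inequality_0) auto
  then show ?thesis by simp
qed

lemma powr_le_one_add_powr:
  fixes y t t0 :: real
  assumes "0 \<le> y" "0 \<le> t" "t \<le> t0"
  shows "y powr t \<le> 1 + y powr t0"
proof (cases "y \<le> 1")
  case True
  then have "y powr t \<le> 1" using assms by (intro powr_le1) auto
  then show ?thesis by (smt (verit) powr_ge_zero)
next
  case False
  then have "y powr t \<le> y powr t0" using assms by (intro powr_mono) auto
  then show ?thesis by simp
qed

lemma integrable_mult_powr_interpolate:
  fixes h g :: "'a \<Rightarrow> real"
  assumes "integrable M h" "integrable M (\<lambda>x. h x * g x powr t0)"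
    and [measurable]: "g \<in> borel_measurable M"
    and h_nonneg: "\<And>x. x \<in> space M \<Longrightarrow> 0 \<le> h x"
    and g_nonneg: "\<And>x. x \<in> space M \<Longrightarrow> 0 \<le> g x"
    and "0 \<le> t" "t \<le> t0"
  shows "integrable M (\<lambda>x. h x * g x powr t)"
proof (rule Bochner_Integration.integrable_bound[OF Bochner_Integration.integrable_add[OF assms(1,2)]])
  have "h \<in> borel_measurable M" using assms(1) by measurable
  then show "(\<lambda>x. h x * g x powr t) \<in> borel_measurable M" by measurable
  show "AE x in M. norm (h x * g x powr t) \<le> norm (h x + h x * g x powr t0)"
  proof (rule AE_I2)
    fix x assume x: "x \<in> space M"
    have "h x * g x powr t \<le> h x * (1 + g x powr t0)"
      using powr_le_one_add_powr[OF g_nonneg[OF x] \<open>0 \<le> t\<close> \<open>t \<le> t0\<close>] h_nonneg[OF x]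
      by (rule mult_left_mono)
    then show "norm (h x * g x powr t) \<le> norm (h x + h x * g x powr t0)"
      using h_nonneg[OF x] by (simp add: algebra_simps)
  qed
qed

lemma integral_mult_powr_pos:
  fixes h g :: "'a \<Rightarrow> real"
  assumes int: "integrable M (\<lambda>x. h x * g x powr t)"
    and [measurable]: "h \<in> borel_measurable M" and "(\<integral>x. h x \<partial>M) \<noteq> 0"
    and h_nonneg: "\<And>x. x \<in> space M \<Longrightarrow> 0 \<le> h x"
    and g_nonzero: "\<And>x. x \<in> space M \<Longrightarrow> h x \<noteq> 0 \<Longrightarrow> g x \<noteq> 0"
  shows "0 < (\<integral>x. h x * g x powr t \<partial>M)"
proof -
  have "(\<integral>x. h x * g x powr t \<partial>M) \<noteq> 0"
  proof
    assume "(\<integral>x. h x * g x powr t \<partial>M) = 0"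
    then have "AE x in M. h x * g x powr t = 0"
      using int h_nonneg by (subst (asm) integral_nonneg_eq_0_iff_AE) auto
    then have "AE x in M. h x = 0"
      using AE_space by eventually_elim (use g_nonzero in auto)
    then have "(\<integral>x. h x \<partial>M) = 0"
      by (simp add: integral_eq_zero_AE)
    with \<open>(\<integral>x. h x \<partial>M) \<noteq> 0\<close> show False ..
  qed
  moreover have "0 \<le> (\<integral>x. h x * g x powr t \<partial>M)"
    using h_nonneg by (intro Bochner_Integration.integral_nonneg) simp
  ultimately show ?thesis by simp
qed

lemma lyapunov_integral_powr:
  fixes h g :: "'a \<Rightarrow> real"
  assumes h_int: "integrable M h" and h_prob: "(\<integral>x. h x \<partial>M) = 1"
    and h_nonneg: "\<And>x. x \<in> space M \<Longrightarrow> 0 \<le> h x"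
    and s_int: "integrable M (\<lambda>x. h x * g x powr s)"
    and t_int: "integrable M (\<lambda>x. h x * g x powr t)"
    and "0 < s" "s \<le> t"
  shows "(\<integral>x. h x * g x powr s \<partial>M) \<le> (\<integral>x. h x * g x powr t \<partial>M) powr (s / t)"
proof -
  define A where "A = (\<integral>x. h x * g x powr t \<partial>M)"
  define r where "r = s / t"
  have r: "0 < r" "r \<le> 1" unfolding r_def using \<open>0 < s\<close> \<open>s \<le> t\<close> by auto
  have A_nonneg: "0 \<le> A"
    unfolding A_def using h_nonneg by (intro Bochner_Integration.integral_nonneg) simp
  show ?thesis
  proof (cases "A = 0")
    case True
    then have "AE x in M. h x * g x powr t = 0"
      unfolding A_def using t_int h_nonneg by (subst (asm) integral_nonneg_eq_0_iff_AE) auto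
    then have "AE x in M. h x * g x powr s = 0"
      by eventually_elim auto
    then have "(\<integral>x. h x * g x powr s \<partial>M) = 0"
      by (simp add: integral_eq_zero_AE)
    then show ?thesis by simp
  next
    case False
    with A_nonneg have "0 < A" by simp
    \<comment> \<open>the tangent line of \<open>y \<mapsto> y powr r\<close> at \<open>y = 1\<close>, applied to \<open>y = g\<^sup>t / A\<close>\<close>
    have pointwise: "h x * g x powr s \<le> A powr r * ((1 - r) * h x + (r / A) * (h x * g x powr t))"
      if x: "x \<in> space M" for x
    proof -
      have "g x powr s = (g x powr t / A) powr r * A powr r"
        using \<open>0 < A\<close> \<open>0 < s\<close> \<open>s \<le> t\<close> by (simp add: powr_divide powr_powr r_def)
      also have "\<dots> \<le> (1 - r + r * (g x powr t / A)) * A powr r"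
        using powr_le_tangent[OF r, of "g x powr t / A"] \<open>0 < A\<close> by (intro mult_right_mono) auto
      finally show ?thesis
        using mult_left_mono h_nonneg[OF x] by (fastforce simp: algebra_simps)
    qed
    have "(\<integral>x. h x * g x powr s \<partial>M)
        \<le> (\<integral>x. A powr r * ((1 - r) * h x + (r / A) * (h x * g x powr t)) \<partial>M)"
      using pointwise s_int t_int h_int by (intro integral_mono) auto
    also have "\<dots> = A powr r * ((1 - r) * 1 + (r / A) * A)"
      using t_int h_int h_prob by (simp add: A_def)
    also have "\<dots> = A powr r" using \<open>0 < A\<close> by simp
    finally show ?thesis unfolding A_def r_def .
  qed
qed

lemma mono_on_ln_integral_powr_div:
  fixes h g :: "'a \<Rightarrow> real"
  assumes h_int: "integrable M h" and h_prob: "(\<integral>x. h x \<partial>M) = 1"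
    and h_nonneg: "\<And>x. x \<in> space M \<Longrightarrow> 0 \<le> h x"
    and g_meas: "g \<in> borel_measurable M" and g_nonneg: "\<And>x. x \<in> space M \<Longrightarrow> 0 \<le> g x"
    and g_nonzero: "\<And>x. x \<in> space M \<Longrightarrow> h x \<noteq> 0 \<Longrightarrow> g x \<noteq> 0"
    and t0_int: "integrable M (\<lambda>x. h x * g x powr t0)"
  shows "mono_on {0<..t0} (\<lambda>t. ln (\<integral>x. h x * g x powr t \<partial>M) / t)"
proof (rule mono_onI)
  fix s t assume st: "s \<in> {0<..t0}" "t \<in> {0<..t0}" "s \<le> t"
  let ?I = "\<lambda>t. \<integral>x. h x * g x powr t \<partial>M"
  have int: "integrable M (\<lambda>x. h x * g x powr u)" if "u \<in> {0<..t0}" for u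
    using integrable_mult_powr_interpolate[OF h_int t0_int g_meas h_nonneg g_nonneg] that by simp
  have pos: "0 < ?I u" if "u \<in> {0<..t0}" for u
    using h_prob h_nonneg g_nonzero
    by (intro integral_mult_powr_pos[OF int[OF that]] borel_measurable_integrable[OF h_int]) auto
  have "?I s \<le> ?I t powr (s / t)"
    using st by (intro lyapunov_integral_powr h_int h_prob h_nonneg int) auto
  then have "ln (?I s) \<le> s / t * ln (?I t)"
    using st pos[of s] pos[of t] by (subst ln_powr [symmetric]) (simp del: ln_powr)
  then show "ln (?I s) / s \<le> ln (?I t) / t"
    using st by (simp add: field_simps)
qed

lemma wLp_nn_conjugate_exponent:
  fixes \<omega> :: "'a \<Rightarrow> real"
  assumes "1 < p" "\<And>x. x \<in> space M \<Longrightarrow> 0 \<le> \<omega> x"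
  shows "wLp_nn M (\<lambda>x. \<omega> x powr (1 / p)) (p / (p - 1)) f
    = (\<integral>\<^sup>+x. ennreal (norm (f x) * (norm (f x) * \<omega> x) powr (1 / (p - 1))) \<partial>M)"
  unfolding wLp_nn_def
proof (intro nn_integral_cong arg_cong[where f = ennreal])
  fix x assume "x \<in> space M"
  then have "0 \<le> \<omega> x" by (rule assms(2))
  have exp_split: "p / (p - 1) = 1 + 1 / (p - 1)" and exp_prod: "1 / p * (p / (p - 1)) = 1 / (p - 1)"
    using \<open>1 < p\<close> by (simp_all add: field_simps)
  show "norm (f x) powr (p / (p - 1)) * (\<omega> x powr (1 / p)) powr (p / (p - 1))
      = norm (f x) * (norm (f x) * \<omega> x) powr (1 / (p - 1))"
    using \<open>0 \<le> \<omega> x\<close> unfolding powr_powr exp_prod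
    by (cases "f x = 0") (simp_all add: exp_split powr_add powr_mult)
qed

lemma wLp_norm_conjugate_exponent:
  fixes \<omega> :: "'a \<Rightarrow> real"
  assumes "1 < p" "\<And>x. x \<in> space M \<Longrightarrow> 0 \<le> \<omega> x"
    and [measurable]: "f \<in> borel_measurable M" "\<omega> \<in> borel_measurable M"
  shows "wLp_norm M (\<lambda>x. \<omega> x powr (1 / p)) (p / (p - 1)) f
    = (\<integral>x. norm (f x) * (norm (f x) * \<omega> x) powr (1 / (p - 1)) \<partial>M) powr ((p - 1) / p)"
proof -
  have "enn2real (wLp_nn M (\<lambda>x. \<omega> x powr (1 / p)) (p / (p - 1)) f)
      = (\<integral>x. norm (f x) * (norm (f x) * \<omega> x) powr (1 / (p - 1)) \<partial>M)"
    using assms(2) by (subst wLp_nn_conjugate_exponent[OF assms(1)])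
      (auto intro!: enn2real_nn_integral_eq_integral)
  then show ?thesis by (simp add: wLp_norm_def)
qed

lemma conjugate_exponent:
  fixes p q :: real
  assumes "1 < q" "1 / p + 1 / q = 1"
  shows "1 < p" "q = p / (p - 1)"
proof -
  have "1 / p = (q - 1) / q" using assms by (simp add: field_simps)
  then have p: "p = q / (q - 1)" by (metis divide_divide_eq_right div_by_1 mult_1)
  then show "1 < p" using assms(1) by simp
  show "q = p / (p - 1)" using assms(1) by (simp add: p divide_simps)
qed

theorem proposition2p1:
  fixes M :: "'a measure" and \<omega> :: "'a \<Rightarrow> real" and f :: "'a \<Rightarrow> complex"
    and p0 q0 :: real
  assumes "sigma_finite_measure M"
    and "\<omega> \<in> borel_measurable M" and "\<forall>x\<in>space M. \<omega> x > 0"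
    and "1 < q0" and "q0 \<le> p0" and "1 / p0 + 1 / q0 = 1"
    and "integrable M f"
    and "f \<in> borel_measurable M"
    and "wLp_nn M (\<lambda>x. \<omega> x powr (1 / p0)) q0 f < \<infinity>"
    and "(\<integral>x. norm (f x) \<partial>M) = 1"
  shows "mono_on {p0..}
           (\<lambda>p. - p * ln (wLp_norm M (\<lambda>x. \<omega> x powr (1 / p)) (p / (p - 1)) f))"
proof -
  note [measurable] = assms(2,8)
  have \<omega>_nonneg: "\<And>x. x \<in> space M \<Longrightarrow> 0 \<le> \<omega> x" using assms(3) by (simp add: less_imp_le)
  have "1 < p0" and q0: "q0 = p0 / (p0 - 1)" using conjugate_exponent[OF assms(4,6)] by auto
  define h where "h x = norm (f x)" for x
  define g where "g x = norm (f x) * \<omega> x" for x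
  define I where "I t = (\<integral>x. h x * g x powr t \<partial>M)" for t
  define t0 where "t0 = 1 / (p0 - 1)"
  have "(\<integral>\<^sup>+x. ennreal (h x * g x powr t0) \<partial>M) < \<infinity>"
    using assms(9) wLp_nn_conjugate_exponent[OF \<open>1 < p0\<close>, of M \<omega> f] \<omega>_nonneg
    by (simp add: q0 h_def g_def t0_def)
  then have "integrable M (\<lambda>x. h x * g x powr t0)"
    by (intro integrableI_nonneg) (simp_all add: h_def g_def)
  then have mono: "mono_on {0<..t0} (\<lambda>t. ln (I t) / t)"
    unfolding I_def using assms(3,7,10) \<omega>_nonneg
    by (intro mono_on_ln_integral_powr_div) (auto simp: h_def g_def)
  have eq: "- p * ln (wLp_norm M (\<lambda>x. \<omega> x powr (1 / p)) (p / (p - 1)) f)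
      = - (ln (I (1 / (p - 1))) / (1 / (p - 1)))" if "p0 \<le> p" for p
    using that \<open>1 < p0\<close> \<omega>_nonneg
    by (simp add: wLp_norm_conjugate_exponent I_def h_def g_def)
  show ?thesis
  proof (rule mono_onI)
    fix p p' assume "p \<in> {p0..}" "p' \<in> {p0..}" "p \<le> p'"
    then have "1 / (p' - 1) \<in> {0<..t0}" "1 / (p - 1) \<in> {0<..t0}" "1 / (p' - 1) \<le> 1 / (p - 1)"
      using \<open>1 < p0\<close> by (auto simp: t0_def intro!: divide_left_mono)
    then have "ln (I (1 / (p' - 1))) / (1 / (p' - 1)) \<le> ln (I (1 / (p - 1))) / (1 / (p - 1))"
      by (rule mono_onD[OF mono])
    then show "- p * ln (wLp_norm M (\<lambda>x. \<omega> x powr (1 / p)) (p / (p - 1)) f)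
        \<le> - p' * ln (wLp_norm M (\<lambda>x. \<omega> x powr (1 / p')) (p' / (p' - 1)) f)"
      using \<open>p \<in> {p0..}\<close> \<open>p' \<in> {p0..}\<close> by (simp only: eq atLeast_iff)
  qed
qed

end
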